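(* Let $n,k,\bar k,\bar m$ be integers with $\bar k\ge2$, $\bar m\ge 2$, $\bar m\binom{\bar k}{2}=\binom{k}{2}$ and $\bar m\bar k\le n$. Let $A$ be a network (of the type below) on $\{1,\dots,n\}$ consisting of $\bar m$ pairwise disjoint mini fully connected networks each on $\bar k$ nodes (all pairs within each block linked, no other links), the remaining $n-\bar m\bar k$ nodes isolated; and let $B$ be a network consisting of one mini fully connected network on $k$ nodes and $n-k$ isolated nodes. Then (both networks have the same number of links and) $$\sum_{i=1}^n\Delta_i(A)\le\sum_{i=1}^n\Delta_i(B).$$
   Context: Version-age model. A gossip network on a finite node set $\mathcal N$ is specified by source rates $\lambda_{0j}>0$ and gossip rates $\lambda_{ij}\ge 0$ ($i\neq j$; rate at which $i$ sends to $j$); $\lambda_s>0$ is the source's update rate. For nonempty $S\subseteq\mathcal N$ let $N(S)=\{i\in\mathcal N\setminus S:\ \sum_{j\in S}\lambda_{ij}>0\}$ and define $$\Delta_S=\frac{\lambda_s+\sum_{i\in N(S)}\big(\sum_{j\in S}\lambda_{ij}\big)\Delta_{S\cup\{i\}}}{\sum_{j\in S}\lambda_{0j}+\sum_{i\in N(S)}\sum_{j\in S}\lambda_{ij}}$$ (well defined by downward induction on $|S|$); $\Delta_i=\Delta_{\{i\}}$, and $\Delta_i(G)$ denotes this quantity in network $G$. Networks with uniform link rate: node set $\{1,\dots,n\}$, $\lambda_{0j}=\lambda/n$ for all $j$, and a set of links (unordered pairs of distinct nodes); for each link $\{a,b\}$, $\lambda_{ab}=\lambda_{ba}=\lambda/n$,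 and $\lambda_{ab}=0$ otherwise. A node with no links is isolated. *)

theory Defs
  imports Complex_Main
begin

text \<open>General version-age network: node set N, source rates l0 j, gossip rates l i j
  (rate at which i sends to j), source update rate ls.\<close>

definition nbr :: "'a set \<Rightarrow> ('a \<Rightarrow> 'a \<Rightarrow> real) \<Rightarrow> 'a set \<Rightarrow> 'a set" where
  "nbr N l S = {i \<in> N - S. (\<Sum>j\<in>S. l i j) > 0}"

text \<open>Delta_S, computed by downward recursion on |S|; the first argument is a fuel
  counter which is always sufficient (see delta below).\<close>
fun deltaF :: "nat \<Rightarrow> 'a set \<Rightarrow> ('a \<Rightarrow> real) \<Rightarrow> ('a \<Rightarrow> 'a \<Rightarrow> real) \<Rightarrow> real \<Rightarrow> 'a set \<Rightarrow> real" where
  "deltaF 0 N l0 l ls S = 0"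
| "deltaF (Suc f) N l0 l ls S =
     (ls + (\<Sum>i\<in>nbr N l S. (\<Sum>j\<in>S. l i j) * deltaF f N l0 l ls (insert i S)))
     / ((\<Sum>j\<in>S. l0 j) + (\<Sum>i\<in>nbr N l S. \<Sum>j\<in>S. l i j))"

definition delta :: "'a set \<Rightarrow> ('a \<Rightarrow> real) \<Rightarrow> ('a \<Rightarrow> 'a \<Rightarrow> real) \<Rightarrow> real \<Rightarrow> 'a set \<Rightarrow> real" where
  "delta N l0 l ls S = deltaF (card N - card S + 1) N l0 l ls S"

definition unif_l0 :: "nat \<Rightarrow> real \<Rightarrow> nat \<Rightarrow> real" where
  "unif_l0 n lam j = lam / real n"

definition unif_l :: "nat \<Rightarrow> real \<Rightarrow> nat set set \<Rightarrow> nat \<Rightarrow> nat \<Rightarrow> real" where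
  "unif_l n lam E a b = (if a \<noteq> b \<and> {a, b} \<in> E then lam / real n else 0)"

definition delta_unif :: "nat \<Rightarrow> real \<Rightarrow> real \<Rightarrow> nat set set \<Rightarrow> nat \<Rightarrow> real" where
  "delta_unif n lam ls E i = delta {1..n} (unif_l0 n lam) (unif_l n lam E) ls {i}"

definition clique_links :: "nat \<Rightarrow> (nat \<Rightarrow> nat set) \<Rightarrow> nat set set" where
  "clique_links m C = {{a, b} | a b. a \<noteq> b \<and> (\<exists>t<m. a \<in> C t \<and> b \<in> C t)}"

end

theory Submission
  imports Defs "HOL-Analysis.Harmonic_Numbers"
begin

text \<open>In a network whose components are cliques the recursion for \<open>\<Delta>\<^sub>S\<close> can be solved in
  closed form: if \<open>S\<close> is a set of \<open>s\<close> nodes inside a clique with \<open>c\<close> nodes, then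
  \<open>\<Delta>\<^sub>S = Q (H\<^sub>c - H\<^sub>s\<^sub>-\<^sub>1) / (c - s + 1)\<close> with \<open>Q = \<lambda>\<^sub>s n / \<lambda>\<close> and \<open>H\<close> the harmonic numbers.
  Hence a node of a \<open>c\<close>-clique has \<open>\<Delta>\<^sub>i = Q H\<^sub>c / c\<close> and an isolated node has \<open>\<Delta>\<^sub>i = Q\<close>, and
  the total age is \<open>Q (n - \<Sigma> (c - H\<^sub>c))\<close>, summed over the cliques. Comparing the two networks
  with equally many links thus amounts to the saving per link, proportional to
  \<open>(c - H\<^sub>c) / (c (c - 1))\<close>, being nonincreasing in \<open>c \<ge> 2\<close>, which follows from \<open>2 (c - H\<^sub>c) \<ge> c (c - 1) / (c + 1)\<close>.\<close>

definition clique_component :: "'a set set \<Rightarrow> 'a set \<Rightarrow> bool" where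
  "clique_component E T \<longleftrightarrow> (\<forall>a\<in>T. \<forall>b. b \<noteq> a \<longrightarrow> ({a, b} \<in> E \<longleftrightarrow> b \<in> T))"

lemma sum_unif_l_clique_component:
  assumes "clique_component E T" and "S \<subseteq> T" and "i \<notin> S"
  shows "(\<Sum>j\<in>S. unif_l n lam E i j) = (if i \<in> T then real (card S) * (lam / real n) else 0)"
proof -
  have "unif_l n lam E i j = (if i \<in> T then lam / real n else 0)" if "j \<in> S" for j
  proof -
    have "j \<in> T" and "i \<noteq> j" using that assms(2,3) by auto
    then have "{i, j} \<in> E \<longleftrightarrow> i \<in> T"
      using assms(1) unfolding clique_component_def by (metis insert_commute)
    with \<open>i \<noteq> j\<close> show ?thesis unfolding unif_l_def by simp
  qed
  then show ?thesis by simp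
qed

lemma nbr_unif_clique_component:
  assumes "clique_component E T" and "S \<subseteq> T" and "T \<subseteq> {1..n}" and "S \<noteq> {}"
    and "lam > 0"
  shows "nbr {1..n} (unif_l n lam E) S = T - S"
proof -
  have "finite S" using assms(2,3) by (meson finite_atLeastAtMost finite_subset)
  then have "card S > 0" using assms(4) by (simp add: card_gt_0_iff)
  moreover have "n > 0" using assms(2-4) by auto
  ultimately have "real (card S) * (lam / real n) > 0" using assms(5) by simp
  then have "(\<Sum>j\<in>S. unif_l n lam E i j) > 0 \<longleftrightarrow> i \<in> T" if "i \<notin> S" for i
    using sum_unif_l_clique_component[OF assms(1,2) that] by simp
  then show ?thesis unfolding nbr_def using assms(3) by auto
qed

lemma deltaF_Suc_unif_clique_component:
  assumes "clique_component E T" and "S \<subseteq> T" and "T \<subseteq> {1..n}" and "S \<noteq> {}"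
    and "lam > 0"
  defines "r \<equiv> real (card S) * (lam / real n)"
  shows "deltaF (Suc f) {1..n} (unif_l0 n lam) (unif_l n lam E) ls S =
    (ls + r * (\<Sum>i\<in>T - S. deltaF f {1..n} (unif_l0 n lam) (unif_l n lam E) ls (insert i S)))
      / (r * (real (card T) - real (card S) + 1))"
proof -
  have "finite T" using assms(3) by (rule finite_subset) simp
  then have "card (T - S) = card T - card S" and "card S \<le> card T"
    using assms(2) by (simp_all add: card_Diff_subset finite_subset card_mono)
  moreover have "(\<Sum>j\<in>S. unif_l0 n lam j) = r" unfolding unif_l0_def r_def by simp
  moreover have "(\<Sum>j\<in>S. unif_l n lam E i j) = r" if "i \<in> T - S" for i
    using sum_unif_l_clique_component[OF assms(1,2)] that unfolding r_def by auto
  ultimately show ?thesis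
    using nbr_unif_clique_component[OF assms(1-5)]
    by (simp add: sum_distrib_left algebra_simps of_nat_diff)
qed

lemma deltaF_unif_clique_component:
  assumes "clique_component E T" and "T \<subseteq> {1..n}" and "lam > 0"
    and "S \<subseteq> T" and "S \<noteq> {}" and "card T + 1 \<le> f + card S"
  shows "deltaF f {1..n} (unif_l0 n lam) (unif_l n lam E) ls S
    = (ls * real n / lam) * (\<Sum>j=card S..card T. 1 / real j) / real (card T - card S + 1)"
  using assms(4-6)
proof (induction f arbitrary: S)
  case 0
  have "card S \<le> card T" using 0 finite_subset[OF assms(2)] by (simp add: card_mono)
  then show ?case using 0 by simp
next
  case (Suc f)
  define s c where "s = card S" and "c = card T"
  define Q where "Q = ls * real n / lam"
  have "finite T" using finite_subset[OF assms(2)] by simp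
  then have "finite S" using Suc.prems(1) by (rule finite_subset[rotated])
  then have "s \<ge> 1" using Suc.prems(2) s_def by (simp add: Suc_leI card_gt_0_iff)
  have "s \<le> c" using Suc.prems(1) \<open>finite T\<close> card_mono s_def c_def by blast
  have "n > 0" using Suc.prems(1,2) assms(2) by auto
  have rec: "deltaF (Suc f) {1..n} (unif_l0 n lam) (unif_l n lam E) ls S =
    (ls + real s * (lam / real n) *
        (\<Sum>i\<in>T - S. deltaF f {1..n} (unif_l0 n lam) (unif_l n lam E) ls (insert i S)))
      / (real s * (lam / real n) * (real c - real s + 1))"
    using deltaF_Suc_unif_clique_component[OF assms(1) Suc.prems(1) assms(2) Suc.prems(2) assms(3)]
    unfolding s_def c_def .
  show ?case
  proof (cases "s = c")
    case True
    then have empty: "T - S = {}"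
      using Suc.prems(1) \<open>finite T\<close> s_def c_def by (metis Diff_eq_empty_iff card_subset_eq)
    then have "deltaF (Suc f) {1..n} (unif_l0 n lam) (unif_l n lam E) ls S
        = ls / (real s * (lam / real n))"
      unfolding rec empty using True by simp
    then show ?thesis
      using True \<open>s \<ge> 1\<close> \<open>n > 0\<close> assms(3) unfolding s_def c_def by (simp add: field_simps)
  next
    case False
    define h where "h = (\<Sum>j=Suc s..c. 1 / real j)"
    have IH: "deltaF f {1..n} (unif_l0 n lam) (unif_l n lam E) ls (insert i S)
        = Q * h / (real c - real s)" if "i \<in> T - S" for i
    proof -
      have "card (insert i S) = Suc s" using that \<open>finite S\<close> s_def by simp
      then show ?thesis
        using Suc.IH[of "insert i S"] that Suc.prems(1,3) False \<open>s \<le> c\<close>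
        unfolding Q_def h_def c_def s_def by (simp add: of_nat_diff)
    qed
    have "card (T - S) = c - s"
      using Suc.prems(1) \<open>finite S\<close> card_Diff_subset s_def c_def by metis
    then have "(\<Sum>i\<in>T - S. deltaF f {1..n} (unif_l0 n lam) (unif_l n lam E) ls (insert i S)) = Q * h"
      using IH False \<open>s \<le> c\<close> by (simp add: of_nat_diff)
    then have "deltaF (Suc f) {1..n} (unif_l0 n lam) (unif_l n lam E) ls S
        = (ls + real s * (lam / real n) * (Q * h)) / (real s * (lam / real n) * (real c - real s + 1))"
      unfolding rec by simp
    also have "\<dots> = Q * (1 / real s + h) / (real c - real s + 1)"
      using \<open>s \<ge> 1\<close> \<open>n > 0\<close> assms(3) unfolding Q_def by (simp add: field_simps)
    also have "1 / real s + h = (\<Sum>j=s..c. 1 / real j)"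
      unfolding h_def using sum.atLeast_Suc_atMost[of s c "\<lambda>j. 1 / real j"] \<open>s \<le> c\<close> by simp
    finally show ?thesis
      using \<open>s \<le> c\<close> unfolding Q_def s_def c_def by (simp add: of_nat_diff)
  qed
qed

lemma delta_unif_clique_component:
  assumes "clique_component E T" and "T \<subseteq> {1..n}" and "lam > 0" and "i \<in> T"
  shows "delta_unif n lam ls E i = (ls * real n / lam) * harm (card T) / real (card T)"
proof -
  have "card T \<le> n" using card_mono[OF _ assms(2)] by simp
  have "card T \<ge> 1"
    using assms(2,4) finite_subset[OF assms(2)] by (simp add: Suc_le_eq card_gt_0_iff) blast
  have "delta_unif n lam ls E i
      = deltaF (n - 1 + 1) {1..n} (unif_l0 n lam) (unif_l n lam E) ls {i}"
    unfolding delta_unif_def delta_def by simp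
  also have "\<dots> = (ls * real n / lam) * (\<Sum>j=1..card T. 1 / real j) / real (card T)"
    using deltaF_unif_clique_component[OF assms(1-3), of "{i}"] assms(4)
      \<open>card T \<le> n\<close> \<open>card T \<ge> 1\<close> by simp
  finally show ?thesis by (simp add: harm_def inverse_eq_divide)
qed

lemma clique_links_eq: "clique_links m C = (\<Union>t<m. {B. B \<subseteq> C t \<and> card B = 2})"
  unfolding clique_links_def by (auto simp: card_2_iff)

lemma card_clique_links:
  assumes "\<forall>t<m. finite (C t) \<and> card (C t) = c"
    and "\<forall>s<m. \<forall>t<m. s \<noteq> t \<longrightarrow> C s \<inter> C t = {}"
  shows "card (clique_links m C) = m * (c choose 2)"
proof -
  have "card (\<Union>t<m. {B. B \<subseteq> C t \<and> card B = 2}) = (\<Sum>t<m. card {B. B \<subseteq> C t \<and> card B = 2})"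
  proof (rule card_UN_disjoint)
    show "\<forall>t\<in>{..<m}. finite {B. B \<subseteq> C t \<and> card B = 2}" using assms(1) by auto
    show "\<forall>s\<in>{..<m}. \<forall>t\<in>{..<m}. s \<noteq> t \<longrightarrow>
        {B. B \<subseteq> C s \<and> card B = 2} \<inter> {B. B \<subseteq> C t \<and> card B = 2} = {}"
      using assms(2) by (fastforce simp: card_2_iff)
  qed simp
  also have "\<dots> = (\<Sum>t<m. c choose 2)"
    using assms(1) by (intro sum.cong) (auto simp: n_subsets)
  finally show ?thesis unfolding clique_links_eq by simp
qed

lemma clique_component_clique_links:
  assumes "\<forall>s<m. \<forall>t<m. s \<noteq> t \<longrightarrow> C s \<inter> C t = {}" and "t < m"
  shows "clique_component (clique_links m C) (C t)"
  unfolding clique_component_def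
proof (intro ballI allI impI)
  fix a b assume "a \<in> C t" "b \<noteq> a"
  show "{a, b} \<in> clique_links m C \<longleftrightarrow> b \<in> C t"
  proof
    assume "{a, b} \<in> clique_links m C"
    then obtain t' where "t' < m" "{a, b} \<subseteq> C t'" unfolding clique_links_eq by auto
    with assms \<open>a \<in> C t\<close> show "b \<in> C t" by blast
  next
    assume "b \<in> C t"
    with assms(2) \<open>a \<in> C t\<close> \<open>b \<noteq> a\<close> show "{a, b} \<in> clique_links m C"
      unfolding clique_links_def by blast
  qed
qed

lemma clique_component_clique_links_uncovered:
  assumes "a \<notin> (\<Union>t<m. C t)"
  shows "clique_component (clique_links m C) {a}"
  using assms unfolding clique_component_def clique_links_eq by auto

lemma sum_delta_unif_clique_links:
  assumes "lam > 0"
    and "\<forall>t<m. C t \<subseteq> {1..n} \<and> card (C t) = c"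
    and "\<forall>s<m. \<forall>t<m. s \<noteq> t \<longrightarrow> C s \<inter> C t = {}"
  shows "(\<Sum>i=1..n. delta_unif n lam ls (clique_links m C) i)
    = (ls * real n / lam) * (real n - real m * (real c - harm c))"
proof -
  define Q where "Q = ls * real n / lam"
  define U where "U = (\<Union>t<m. C t)"
  have "U \<subseteq> {1..n}" using assms(2) U_def by auto
  have "\<forall>t<m. finite (C t)" using assms(2) by (meson finite_atLeastAtMost finite_subset)
  then have "card U = m * c"
    unfolding U_def using assms(2,3) by (subst card_UN_disjoint) auto
  have "delta_unif n lam ls (clique_links m C) i = (if i \<in> U then Q * harm c / real c else Q)"
    if "i \<in> {1..n}" for i
  proof (cases "i \<in> U")
    case True
    then obtain t where "t < m" "i \<in> C t" unfolding U_def by auto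
    then show ?thesis
      using delta_unif_clique_component[OF clique_component_clique_links[OF assms(3)]]
        assms(1,2) True unfolding Q_def by simp
  next
    case False
    then show ?thesis
      using delta_unif_clique_component[OF clique_component_clique_links_uncovered]
        assms(1) that unfolding Q_def U_def by (simp add: harm_expand(2))
  qed
  moreover have "{1..n} \<inter> U = U" using \<open>U \<subseteq> {1..n}\<close> by blast
  ultimately have "(\<Sum>i=1..n. delta_unif n lam ls (clique_links m C) i)
      = (\<Sum>i\<in>U. Q * harm c / real c) + (\<Sum>i\<in>{1..n} - U. Q)"
    by (simp add: sum.If_cases Diff_eq)
  also have "\<dots> = real (m * c) * (Q * harm c / real c) + (real n - real (m * c)) * Q"
    using \<open>U \<subseteq> {1..n}\<close> \<open>card U = m * c\<close> card_mono[OF _ \<open>U \<subseteq> {1..n}\<close>]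
    by (simp add: card_Diff_subset finite_subset[OF _ finite_atLeastAtMost] of_nat_diff)
  also have "\<dots> = Q * (real n - real m * (real c - harm c))"
    by (cases "c = 0") (simp_all add: field_simps harm_expand(1))
  finally show ?thesis unfolding Q_def .
qed

lemma harm_excess_lower_bound:
  "c \<ge> 1 \<Longrightarrow> real c * (real c - 1) / (real c + 1) \<le> 2 * (real c - harm c)"
proof (induction c rule: dec_induct)
  case base
  then show ?case by (simp add: harm_expand(2))
next
  case (step c)
  have "real (Suc c) * (real (Suc c) - 1) / (real (Suc c) + 1) \<le> real c"
    by (simp add: field_simps)
  also have "real c = real c * (real c - 1) / (real c + 1) + 2 * real c / (real c + 1)"
  proof -
    have "real c + 1 \<noteq> 0" by linarith
    moreover have "real c * (real c - 1) + 2 * real c = real c * (real c + 1)"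
      by (simp add: algebra_simps)
    ultimately show ?thesis by (simp add: add_divide_distrib[symmetric])
  qed
  also have "\<dots> \<le> 2 * (real c - harm c) + 2 * real c / (real c + 1)"
    using step.IH by simp
  also have "\<dots> = 2 * (real (Suc c) - harm (Suc c))"
    by (simp add: harm_Suc field_simps)
  finally show ?case .
qed

lemma harm_excess_per_link_Suc_le:
  assumes "c \<ge> 2"
  shows "(real (Suc c) - harm (Suc c)) / (real (Suc c) * real c)
    \<le> (real c - harm c) / (real c * (real c - 1))"
proof -
  define x where "x = real c - harm c"
  have c: "real c - 1 > 0" "real c + 1 > 0" using assms by auto
  have "real (Suc c) - harm (Suc c) = x + real c / (real c + 1)"
    unfolding x_def harm_Suc using c by (simp add: field_simps)
  moreover have "(x + real c / (real c + 1)) * (real c - 1) \<le> (real c + 1) * x"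
  proof -
    have "real c * (real c - 1) / (real c + 1) \<le> 2 * x"
      using harm_excess_lower_bound[of c] assms unfolding x_def by simp
    then show ?thesis using c by (simp add: field_simps)
  qed
  ultimately have "(real (Suc c) - harm (Suc c)) / (real (Suc c) * real c)
      = (x + real c / (real c + 1)) / ((real c + 1) * real c)"
    by (simp add: algebra_simps)
  also have "\<dots> = (x + real c / (real c + 1)) * (real c - 1) / ((real c + 1) * (real c * (real c - 1)))"
    using c mult_divide_mult_cancel_right[of "real c - 1" "x + real c / (real c + 1)" "(real c + 1) * real c"]
    by (simp add: mult.assoc)
  also have "\<dots> \<le> (real c + 1) * x / ((real c + 1) * (real c * (real c - 1)))"
    using \<open>(x + real c / (real c + 1)) * (real c - 1) \<le> (real c + 1) * x\<close> c
    by (intro divide_right_mono) auto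
  also have "\<dots> = x / (real c * (real c - 1))" using c by simp
  finally show ?thesis unfolding x_def .
qed

lemma harm_excess_per_link_antimono:
  assumes "2 \<le> a" and "a \<le> b"
  shows "(real b - harm b) / (real b * (real b - 1)) \<le> (real a - harm a) / (real a * (real a - 1))"
  using assms(2)
proof (induction b rule: dec_induct)
  case (step b)
  then show ?case
    using harm_excess_per_link_Suc_le[of b] assms(1) by simp
qed simp

lemma real_choose_two: "real (n choose 2) = real n * (real n - 1) / 2"
  by (induction n) (simp_all add: numeral_2_eq_2 field_simps)

lemma harm_excess_le_of_equal_links:
  assumes "kb \<ge> 2" and "mb \<ge> 2" and "mb * (kb choose 2) = k choose 2"
  shows "real k - harm k \<le> real mb * (real kb - harm kb)"
proof -
  have "kb \<le> k"
  proof (rule ccontr)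
    assume "\<not> kb \<le> k"
    then have "mb * (kb choose 2) \<le> kb choose 2"
      using assms(3) binomial_right_mono[of k kb 2] by simp
    moreover have "kb choose 2 > 0" using assms(1) by simp
    ultimately show False using assms(2) by simp
  qed
  have "real mb * real (kb choose 2) = real (k choose 2)"
    using assms(3) of_nat_mult by metis
  then have links: "real k * (real k - 1) = real mb * (real kb * (real kb - 1))"
    by (simp add: real_choose_two)
  have "real kb \<ge> 2" and "real k \<ge> 2" using assms(1) \<open>kb \<le> k\<close> by simp_all
  then have "real k - harm k = real k * (real k - 1) * ((real k - harm k) / (real k * (real k - 1)))"
    by (simp add: field_simps)
  also have "\<dots> \<le> real k * (real k - 1) * ((real kb - harm kb) / (real kb * (real kb - 1)))"
    using harm_excess_per_link_antimono[OF assms(1) \<open>kb \<le> k\<close>] \<open>real k \<ge> 2\<close>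
    by (intro mult_left_mono) auto
  also have "\<dots> = real mb * (real kb - harm kb)"
    unfolding links using \<open>real kb \<ge> 2\<close> by (simp add: field_simps)
  finally show ?thesis .
qed

theorem mainTheorem12:
  fixes n k kb mb :: nat and lam ls :: real
    and C :: "nat \<Rightarrow> nat set" and K :: "nat set"
  assumes "lam > 0" and "ls > 0"
    and "kb \<ge> 2" and "mb \<ge> 2"
    and "mb * (kb choose 2) = k choose 2"
    and "mb * kb \<le> n"
    and "\<forall>t<mb. C t \<subseteq> {1..n} \<and> card (C t) = kb"
    and "\<forall>s<mb. \<forall>t<mb. s \<noteq> t \<longrightarrow> C s \<inter> C t = {}"
    and "K \<subseteq> {1..n}" and "card K = k"
  shows "card (clique_links mb C) = card (clique_links 1 (\<lambda>_. K)) \<and>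
    (\<Sum>i=1..n. delta_unif n lam ls (clique_links mb C) i)
      \<le> (\<Sum>i=1..n. delta_unif n lam ls (clique_links 1 (\<lambda>_. K)) i)"
proof
  have K: "\<forall>t<(1::nat). K \<subseteq> {1..n} \<and> card K = k"
    "\<forall>s<(1::nat). \<forall>t<(1::nat). s \<noteq> t \<longrightarrow> K \<inter> K = {}"
    using assms(9,10) by auto
  have "\<forall>t<mb. finite (C t) \<and> card (C t) = kb" "\<forall>t<(1::nat). finite K \<and> card K = k"
    using assms(7,9,10) by (meson finite_atLeastAtMost finite_subset)+
  then show "card (clique_links mb C) = card (clique_links 1 (\<lambda>_. K))"
    using card_clique_links[of mb C kb] card_clique_links[of 1 "\<lambda>_. K" k] assms(5,8) K(2)
    by simp
  have "n > 0" using mult_le_mono[OF assms(4,3)] assms(6) by linarith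
  then have "ls * real n / lam \<ge> 0" using assms(1,2) by simp
  moreover have "real n - real mb * (real kb - harm kb) \<le> real n - real (1::nat) * (real k - harm k)"
    using harm_excess_le_of_equal_links[OF assms(3-5)] by simp
  ultimately show "(\<Sum>i=1..n. delta_unif n lam ls (clique_links mb C) i)
      \<le> (\<Sum>i=1..n. delta_unif n lam ls (clique_links 1 (\<lambda>_. K)) i)"
    unfolding sum_delta_unif_clique_links[OF assms(1,7,8)] sum_delta_unif_clique_links[OF assms(1) K]
    by (rule mult_left_mono[rotated])
qed

end
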